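(* Consider the single-item sale in an economic network described in the context, and the mechanism IDM-TC defined there. If the economic network forms a tree, then IDM-TC is efficient, individually rational, incentive compatible and weakly budget balanced. Moreover, for every feasible type report profile, the seller's revenue under IDM-TC is at least the revenue of the Vickrey (second-price) auction run among the seller's direct neighbours, i.e. at least the second highest bid among the buyers in $r_s$.
   Context: Setting. A seller $s$ sells one indivisible commodity. Besides $s$, there is a set $N=\{1,\dots,n\}$ of agents, each either a buyer or an intermediate node. Each buyer $i$ has a private value $b_i\ge 0$ for the commodity. Each intermediate node $i$ has a private neighbour set $r_i\subseteq N$ (the agents with whom she can directly exchange the sale information) and a publicly known cost $c_i$ incurred if a trade passes through her. Buyers have no links among themselves. Initially only the seller's neighbours $r_s\subseteq N$ know of the sale. The type of buyer $i$ is $t_i=b_i$ and of intermediate node $i$ is $t_i=r_i$. A buyer reports a bid $t'_i=b'_i\ge 0$; an intermediate node reports $t'_i=r'_i\subseteq r_i$, meaning she passes the sale information to exactly $r'_i$; $t'_i=nil$ if $i$ is uninformed or does not participate. A trading chain from $s$ to $i$ under reports $t'$ is a simple path $(a_1,\dots,a_p,i)$ with $a_1\in r_s$, $a_l\in r'_{a_{l-1}}$ for $1<l\le p$, and $i\in r'_{a_p}$. A report profile $t'$ is feasible if for every $i$, $t'_i\ne nil$ iff there is a trading chain from $s$ to $i$ following the reports $t'_{-i}$; only feasible profiles are considered (when an agent changes her report, the others' profile adjusts so as to remain feasible). For an informed agent $i$, $LCC_i$ is a trading chain from $s$ to $i$ minimizing the total cost of the intermediate nodes on it other than $i$. For a buyer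 $i$, $SW_i=b'_i-\sum_{j\in LCC_i\setminus\{i\}}c_j$. Mechanisms and properties. A mechanism $(\pi,x)$ assigns to each feasible $t'$ an allocation $\pi_i(t')\in\{-1,0,1\}$ ($1$: $i$ is the winner; $-1$: $i$ lies on the selected trading chain to the winner; $0$: otherwise), with at most one winner and the agents with $\pi_i\neq 0$ forming a trading chain from $s$ to the winner, and payments $x_i(t')\in\mathbb R$ (paid by $i$ to the seller; negative means $i$ receives money). Agent $i$'s value is $v_i=b_i$ if $\pi_i=1$, $v_i=-c_i$ if $\pi_i=-1$, $v_i=0$ otherwise; her utility is $v_i-x_i(t')$. The social welfare is $\sum_i v_i$ (computed with reported types). An allocation is efficient if it maximizes social welfare for every feasible $t'$; equivalently it gives the item to $m=\arg\max_{i}SW_i$ along $LCC_m$. $W^*(t')$ is the maximum social welfare under $t'$; for a set $X$ of agents, $W^*_{-X}$ is the maximum social welfare under the profile $t'_{-X}$ in which the agents of $X$ do not participate. Individual rationality (IR): every buyer has nonnegative utility when bidding truthfully, and every intermediate node has nonnegative utility for every report $r'_i\subseteq r_i$ and whatever the others do. Incentive compatibility (IC): for every agent, reporting her true type ($b'_i=b_i$, resp. $r'_i=r_i$, i.e. sharing with all neighbours) maximizes her utility regardless of the others' reports. Weakly budget balanced: the revenue $\sum_{i\in N}x_i(t')$ is $\ge 0$ for every feasible $t'$. Diffusion critical agents. Agent $i$ is a diffusion critical agent of $j$ if every trading chain from $s$ to $j$ passes through $i$ (in particular $i$ is one of $j$'s). $d_i$ is the set of agents having $i$ as a diffusion critical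 agent. The diffusion critical sequence $C_j$ of $j$ is the set of all diffusion critical agents of $j$, ordered $s_1,\dots,s_k,j$ so that $d_{s_1}\supset d_{s_2}\supset\dots\supset d_{s_k}\supset d_j$. IDM-TC. Given feasible $t'$: allocate the item to $m=\arg\max_{i}SW_i$ (random tie-breaking) along $LCC_m$. Write $C_m=\{1,2,\dots,m\}$ in its order, and for $i\in C_m\setminus\{m\}$ let $i+1$ be its successor in $C_m$. Payments: $x_i=W^*_{-d_i}-W^*_{-d_{i+1}}-c_i$ if $i\in C_m\setminus\{m\}$; $x_i=-c_i$ if $i\in LCC_m\setminus C_m$; $x_m=W^*_{-m}+\sum_{j\in LCC_m\setminus\{m\}}c_j$; $x_i=0$ otherwise. The economic network forms a tree means that the undirected graph on $\{s\}\cup N$ whose edges join each of $s$ and the intermediate nodes to their neighbours is a tree. *)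

theory Defs
  imports Complex_Main "HOL-Library.Multiset"
begin

text \<open>A report of an informed agent: a buyer reports a bid, an intermediate node reports
  the set of neighbours she passes the sale information to. \<open>None\<close> is nil.\<close>
datatype 'a report = Bid real | Share "'a set"

type_synonym 'a profile = "'a \<Rightarrow> 'a report option"

record 'a market =
  seller :: 'a
  agents :: "'a set"
  buyers :: "'a set"
  seller_nbrs :: "'a set"
  cost :: "'a \<Rightarrow> real"

definition intermediates :: "'a market \<Rightarrow> 'a set" where
  "intermediates E = agents E - buyers E"

definition bid_of :: "'a profile \<Rightarrow> 'a \<Rightarrow> real" where
  "bid_of t j = (case t j of Some (Bid x) \<Rightarrow> x | _ \<Rightarrow> 0)"

definition shared :: "'a profile \<Rightarrow> 'a \<Rightarrow> 'a set" where
  "shared t i = (case t i of Some (Share R) \<Rightarrow> R | _ \<Rightarrow> {})"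

text \<open>\<open>trading_chain E t i xs\<close>: \<open>xs = [a_1,...,a_p]\<close> and \<open>(a_1,...,a_p,i)\<close> is a trading
  chain from the seller to i following the reports t (of the agents other than i).\<close>
definition trading_chain :: "'a market \<Rightarrow> 'a profile \<Rightarrow> 'a \<Rightarrow> 'a list \<Rightarrow> bool" where
  "trading_chain E t i xs \<longleftrightarrow>
     distinct (xs @ [i]) \<and> set xs \<subseteq> intermediates E \<and>
     hd (xs @ [i]) \<in> seller_nbrs E \<and>
     (\<forall>k < length xs. (xs @ [i]) ! Suc k \<in> shared t (xs ! k))"

definition chain_cost :: "'a market \<Rightarrow> 'a list \<Rightarrow> real" where
  "chain_cost E xs = (\<Sum>j\<leftarrow>xs. cost E j)"

definition valid_report :: "'a market \<Rightarrow> ('a \<Rightarrow> 'a set) \<Rightarrow> 'a \<Rightarrow> 'a report \<Rightarrow> bool" where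
  "valid_report E r i x \<longleftrightarrow>
     (i \<in> buyers E \<and> (\<exists>v. 0 \<le> v \<and> x = Bid v)) \<or>
     (i \<in> intermediates E \<and> (\<exists>R. R \<subseteq> r i \<and> x = Share R))"

definition feasible :: "'a market \<Rightarrow> ('a \<Rightarrow> 'a set) \<Rightarrow> 'a profile \<Rightarrow> bool" where
  "feasible E r t \<longleftrightarrow>
     (\<forall>i. t i \<noteq> None \<longrightarrow> i \<in> agents E \<and> valid_report E r i (the (t i))) \<and>
     (\<forall>i \<in> agents E. t i \<noteq> None \<longleftrightarrow> (\<exists>xs. trading_chain E t i xs))"

text \<open>Truthful report, and the feasible profile produced by intended reports \<open>\<rho>\<close>
  (only the agents reached by the sale information report).\<close>
definition truthful :: "'a market \<Rightarrow> ('a \<Rightarrow> real) \<Rightarrow> ('a \<Rightarrow> 'a set) \<Rightarrow> 'a \<Rightarrow> 'a report" where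
  "truthful E b r i = (if i \<in> buyers E then Bid (b i) else Share (r i))"

definition realize :: "'a market \<Rightarrow> ('a \<Rightarrow> 'a report) \<Rightarrow> 'a profile" where
  "realize E \<rho> = (\<lambda>j. if j \<in> agents E \<and> (\<exists>xs. trading_chain E (Some \<circ> \<rho>) j xs)
                       then Some (\<rho> j) else None)"

definition lcc :: "'a market \<Rightarrow> 'a profile \<Rightarrow> 'a \<Rightarrow> 'a list" where
  "lcc E t i = (SOME xs. trading_chain E t i xs \<and>
                 (\<forall>ys. trading_chain E t i ys \<longrightarrow> chain_cost E xs \<le> chain_cost E ys))"

definition SW :: "'a market \<Rightarrow> 'a profile \<Rightarrow> 'a \<Rightarrow> real" where
  "SW E t i = bid_of t i - chain_cost E (lcc E t i)"

text \<open>Maximum social welfare: over all allocations (no sale, or a sale to an informed buyer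
  along a trading chain).\<close>
definition Wstar :: "'a market \<Rightarrow> 'a profile \<Rightarrow> real" where
  "Wstar E t = Max (insert 0 {bid_of t j - chain_cost E xs | j xs.
                     j \<in> buyers E \<and> t j \<noteq> None \<and> trading_chain E t j xs})"

definition without :: "'a profile \<Rightarrow> 'a set \<Rightarrow> 'a profile" where
  "without t X = (\<lambda>j. if j \<in> X then None else t j)"

definition critical :: "'a market \<Rightarrow> 'a profile \<Rightarrow> 'a \<Rightarrow> 'a \<Rightarrow> bool" where
  "critical E t i j \<longleftrightarrow> (\<forall>xs. trading_chain E t j xs \<longrightarrow> i \<in> set xs \<or> i = j)"

definition dset :: "'a market \<Rightarrow> 'a profile \<Rightarrow> 'a \<Rightarrow> 'a set" where
  "dset E t i = {j. t j \<noteq> None \<and> critical E t i j}"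

definition crit_seq :: "'a market \<Rightarrow> 'a profile \<Rightarrow> 'a \<Rightarrow> 'a set" where
  "crit_seq E t j = {i. t i \<noteq> None \<and> critical E t i j}"

text \<open>Successor of i in the diffusion critical sequence of m (ordered by inclusion of d).\<close>
definition crit_succ :: "'a market \<Rightarrow> 'a profile \<Rightarrow> 'a \<Rightarrow> 'a \<Rightarrow> 'a" where
  "crit_succ E t m i = (THE k. k \<in> crit_seq E t m \<and> dset E t k \<subset> dset E t i \<and>
      (\<forall>l \<in> crit_seq E t m. dset E t l \<subset> dset E t i \<longrightarrow> dset E t l \<subseteq> dset E t k))"

definition informed_buyers :: "'a market \<Rightarrow> 'a profile \<Rightarrow> 'a set" where
  "informed_buyers E t = {j \<in> buyers E. t j \<noteq> None}"

text \<open>Possible winners (random tie-breaking among them); no sale if no informed buyer has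
  nonnegative SW.\<close>
definition winners :: "'a market \<Rightarrow> 'a profile \<Rightarrow> 'a set" where
  "winners E t = {m \<in> informed_buyers E t. 0 \<le> SW E t m \<and>
                    (\<forall>j \<in> informed_buyers E t. SW E t j \<le> SW E t m)}"

text \<open>Possible outcomes: \<open>Some m\<close> = item sold to m along \<open>lcc E t m\<close>; \<open>None\<close> = no sale.
  Each outcome is realized with equal probability.\<close>
definition outcomes :: "'a market \<Rightarrow> 'a profile \<Rightarrow> 'a option set" where
  "outcomes E t = (if winners E t = {} then {None} else Some ` winners E t)"

definition alloc :: "'a market \<Rightarrow> 'a profile \<Rightarrow> 'a option \<Rightarrow> 'a \<Rightarrow> int" where
  "alloc E t w i = (case w of None \<Rightarrow> 0
     | Some m \<Rightarrow> if i = m then 1 else if i \<in> set (lcc E t m) then -1 else 0)"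

definition payment :: "'a market \<Rightarrow> 'a profile \<Rightarrow> 'a option \<Rightarrow> 'a \<Rightarrow> real" where
  "payment E t w i = (case w of None \<Rightarrow> 0
     | Some m \<Rightarrow>
        if i = m then Wstar E (without t {m}) + chain_cost E (lcc E t m)
        else if i \<in> crit_seq E t m then
          Wstar E (without t (dset E t i)) - Wstar E (without t (dset E t (crit_succ E t m i)))
          - cost E i
        else if i \<in> set (lcc E t m) then - cost E i
        else 0)"

definition reported_value :: "'a market \<Rightarrow> 'a profile \<Rightarrow> 'a option \<Rightarrow> 'a \<Rightarrow> real" where
  "reported_value E t w i = (if alloc E t w i = 1 then bid_of t i
     else if alloc E t w i = -1 then - cost E i else 0)"

definition true_value :: "'a market \<Rightarrow> ('a \<Rightarrow> real) \<Rightarrow> 'a profile \<Rightarrow> 'a option \<Rightarrow> 'a \<Rightarrow> real" where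
  "true_value E b t w i = (if alloc E t w i = 1 then b i
     else if alloc E t w i = -1 then - cost E i else 0)"

definition social_welfare :: "'a market \<Rightarrow> 'a profile \<Rightarrow> 'a option \<Rightarrow> real" where
  "social_welfare E t w = (\<Sum>i\<in>agents E. reported_value E t w i)"

definition utility :: "'a market \<Rightarrow> ('a \<Rightarrow> real) \<Rightarrow> 'a profile \<Rightarrow> 'a option \<Rightarrow> 'a \<Rightarrow> real" where
  "utility E b t w i = true_value E b t w i - payment E t w i"

definition expected_utility :: "'a market \<Rightarrow> ('a \<Rightarrow> real) \<Rightarrow> 'a profile \<Rightarrow> 'a \<Rightarrow> real" where
  "expected_utility E b t i =
     (\<Sum>w\<in>outcomes E t. utility E b t w i) / real (card (outcomes E t))"

definition revenue :: "'a market \<Rightarrow> 'a profile \<Rightarrow> 'a option \<Rightarrow> real" where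
  "revenue E t w = (\<Sum>i\<in>agents E. payment E t w i)"

text \<open>Revenue of the Vickrey auction among the seller's neighbours: the second highest bid
  of the buyers in r_s (0 if there are fewer than two of them).\<close>
definition vickrey_revenue :: "'a market \<Rightarrow> 'a profile \<Rightarrow> real" where
  "vickrey_revenue E t =
     (let A = buyers E \<inter> seller_nbrs E;
          L = sorted_list_of_multiset (image_mset (bid_of t) (mset_set A))
      in if card A < 2 then 0 else L ! (card A - 2))"

definition efficient :: "'a market \<Rightarrow> ('a \<Rightarrow> 'a set) \<Rightarrow> bool" where
  "efficient E r \<longleftrightarrow>
     (\<forall>t. feasible E r t \<longrightarrow> (\<forall>w\<in>outcomes E t. social_welfare E t w = Wstar E t))"

definition individually_rational :: "'a market \<Rightarrow> ('a \<Rightarrow> real) \<Rightarrow> ('a \<Rightarrow> 'a set) \<Rightarrow> bool" where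
  "individually_rational E b r \<longleftrightarrow>
     (\<forall>t. feasible E r t \<longrightarrow>
        (\<forall>i\<in>buyers E. t i = Some (Bid (b i)) \<longrightarrow>
            (\<forall>w\<in>outcomes E t. 0 \<le> utility E b t w i)) \<and>
        (\<forall>i\<in>intermediates E. \<forall>w\<in>outcomes E t. 0 \<le> utility E b t w i))"

definition incentive_compatible :: "'a market \<Rightarrow> ('a \<Rightarrow> real) \<Rightarrow> ('a \<Rightarrow> 'a set) \<Rightarrow> bool" where
  "incentive_compatible E b r \<longleftrightarrow>
     (\<forall>\<rho>. (\<forall>j\<in>agents E. valid_report E r j (\<rho> j)) \<longrightarrow>
        (\<forall>i\<in>agents E. \<forall>x. valid_report E r i x \<longrightarrow>
            expected_utility E b (realize E (\<rho>(i := x))) i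
              \<le> expected_utility E b (realize E (\<rho>(i := truthful E b r i))) i))"

definition weakly_budget_balanced :: "'a market \<Rightarrow> ('a \<Rightarrow> 'a set) \<Rightarrow> bool" where
  "weakly_budget_balanced E r \<longleftrightarrow>
     (\<forall>t. feasible E r t \<longrightarrow> (\<forall>w\<in>outcomes E t. 0 \<le> revenue E t w))"

definition net_vertices :: "'a market \<Rightarrow> 'a set" where
  "net_vertices E = insert (seller E) (agents E)"

definition net_edges :: "'a market \<Rightarrow> ('a \<Rightarrow> 'a set) \<Rightarrow> 'a set set" where
  "net_edges E r = {{seller E, j} | j. j \<in> seller_nbrs E} \<union>
                   {{i, j} | i j. i \<in> intermediates E \<and> j \<in> r i}"

definition is_tree :: "'a set \<Rightarrow> 'a set set \<Rightarrow> bool" where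
  "is_tree V Ed \<longleftrightarrow>
     (\<forall>e\<in>Ed. \<exists>u v. u \<noteq> v \<and> u \<in> V \<and> v \<in> V \<and> e = {u, v}) \<and>
     (\<forall>u\<in>V. \<forall>v\<in>V. \<exists>p. p \<noteq> [] \<and> hd p = u \<and> last p = v \<and>
                        (\<forall>k < length p - 1. {p ! k, p ! Suc k} \<in> Ed)) \<and>
     \<not> (\<exists>p. 3 \<le> length p \<and> distinct p \<and>
              (\<forall>k < length p - 1. {p ! k, p ! Suc k} \<in> Ed) \<and> {last p, hd p} \<in> Ed)"

end

theory Submission
  imports Defs
begin

(*
  In a tree every agent has at most one trading chain, so LCC_j is the unique chain to j and
  the diffusion critical agents of j are exactly the agents on it; in particular the
  diffusion critical sequence of the winner m is LCC_m followed by m, and criticality is a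
  partial order along it.  Efficiency is then the definition of the allocation.  The payments
  telescope along C_m = s_1, ..., s_k, m, so the revenue is the optimal welfare without the
  subtree d_{s_1}; it is nonnegative, and it dominates the second-highest bid among the
  seller's neighbouring buyers because all of them except possibly s_1 survive the removal of
  d_{s_1}.
  The winner pays her VCG price, so a truthful buyer gets max(0, b_i - W*_{-i} - cost of LCC_i)
  while any other bid yields 0 or the same amount.  An intermediate s_l on the winning chain
  gets W*_{-d_{s_(l+1)}} - W*_{-d_{s_l}}, her cost being reimbursed.  The second term does not
  depend on her report; sharing with fewer neighbours can only lower the first one: if the
  successor on the chain is unchanged fewer agents are reachable, and otherwise the
  optimum under the misreport is still available once the truthful successor's subtree is
  removed.
*)

section \<open>Simple paths in acyclic graphs\<close>

definition has_cycle :: "('v \<Rightarrow> 'v \<Rightarrow> bool) \<Rightarrow> bool" where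
  "has_cycle R \<longleftrightarrow>
     (\<exists>p. 3 \<le> length p \<and> distinct p \<and> successively R p \<and> R (last p) (hd p))"

lemma successively_rev_symp:
  "symp R \<Longrightarrow> successively R (rev xs) \<longleftrightarrow> successively R xs"
proof -
  assume "symp R"
  then have "(\<lambda>x y. R y x) = R"
    by (intro ext) (auto dest: sympD)
  then show ?thesis
    by (metis successively_rev)
qed

lemma cycle_of_internally_disjoint_paths:
  assumes "symp R"
    and p: "successively R (a # \<alpha> @ [v])" and q: "successively R (a # \<gamma> @ [v])"
    and "distinct (a # \<alpha> @ v # rev \<gamma>)" and "\<alpha> \<noteq> [] \<or> \<gamma> \<noteq> []"
  shows "has_cycle R"
  unfolding has_cycle_def
proof (intro exI conjI)
  let ?c = "(a # \<alpha> @ [v]) @ rev \<gamma>"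
  show "distinct ?c"
    using assms(4) by auto
  show "3 \<le> length ?c"
    using assms(5) by (cases \<alpha>; cases \<gamma>) auto
  have "successively R (\<gamma> @ [v])"
    using q by (simp add: successively_Cons)
  then have "successively R (v # rev \<gamma>)"
    using successively_rev_symp[OF \<open>symp R\<close>, of "\<gamma> @ [v]"] by (simp del: successively_rev)
  then show "successively R ?c"
    using p successively_append_iff[of R "a # \<alpha> @ [v]" "rev \<gamma>"]
    by (cases \<gamma> rule: rev_cases) (auto simp del: successively_rev)
  have "R a (hd (\<gamma> @ [v]))"
    using q by (simp add: successively_Cons)
  then show "R (last ?c) (hd ?c)"
    using \<open>symp R\<close> by (cases \<gamma>) (auto dest: sympD)
qed

lemma cycle_of_diverging_paths:
  assumes "symp R" and "distinct (a # p)" and "distinct (a # q)"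
    and "successively R (a # p)" and "successively R (a # q)"
    and "p \<noteq> []" and "q \<noteq> []" and "hd p \<noteq> hd q" and "last p = last q"
  shows "has_cycle R"
proof -
  have "last p \<in> set q"
    using assms(7,9) by simp
  then obtain \<alpha> v \<beta> where p: "p = \<alpha> @ v # \<beta>" and "v \<in> set q"
    and \<alpha>: "\<forall>y\<in>set \<alpha>. y \<notin> set q"
    using split_list_first_prop[of p "\<lambda>x. x \<in> set q"] assms(6) last_in_set by metis
  then obtain \<gamma> \<delta> where q: "q = \<gamma> @ v # \<delta>"
    by (meson split_list)
  show ?thesis
  proof (rule cycle_of_internally_disjoint_paths[OF assms(1)])
    show "successively R (a # \<alpha> @ [v])"
      using assms(4) successively_append_iff[of R "a # \<alpha> @ [v]" \<beta>] unfolding p by simp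
    show "successively R (a # \<gamma> @ [v])"
      using assms(5) successively_append_iff[of R "a # \<gamma> @ [v]" \<delta>] unfolding q by simp
    show "distinct (a # \<alpha> @ v # rev \<gamma>)"
      using assms(2,3) \<alpha> unfolding p q by auto
    show "\<alpha> \<noteq> [] \<or> \<gamma> \<noteq> []"
      using assms(8) unfolding p q by auto
  qed
qed

lemma acyclic_path_unique:
  assumes "symp R" and "\<not> has_cycle R"
  shows "\<lbrakk>distinct p; distinct q; successively R p; successively R q; p \<noteq> []; q \<noteq> [];
          hd p = hd q; last p = last q\<rbrakk> \<Longrightarrow> p = q"
proof (induction p arbitrary: q)
  case Nil
  then show ?case by simp
next
  case (Cons a p')
  obtain q' where q: "q = a # q'"
    using Cons.prems by (cases q) auto
  consider "p' = []" | "q' = []" | "p' \<noteq> []" "q' \<noteq> []" "hd p' = hd q'"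
    | "p' \<noteq> []" "q' \<noteq> []" "hd p' \<noteq> hd q'"
    by blast
  then show ?case
  proof cases
    case 1
    then show ?thesis
      using Cons.prems q by (cases q' rule: rev_cases) auto
  next
    case 2
    then show ?thesis
      using Cons.prems q by (cases p' rule: rev_cases) auto
  next
    case 3
    then show ?thesis
      using Cons.prems q Cons.IH[of q'] by (auto simp: successively_Cons)
  next
    case 4
    then have "has_cycle R"
      using Cons.prems q by (intro cycle_of_diverging_paths[OF assms(1), of a p' q']) simp_all
    then show ?thesis
      using assms(2) by contradiction
  qed
qed

lemma distinct_nth_in_set_take_iff:
  assumes "distinct xs" and "k < length xs"
  shows "xs ! k \<in> set (take n xs) \<longleftrightarrow> k < n"
proof
  assume "xs ! k \<in> set (take n xs)"
  then obtain l where "l < min n (length xs)" and "xs ! l = xs ! k"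
    by (auto simp: in_set_conv_nth)
  then show "k < n"
    using assms nth_eq_iff_index_eq by fastforce
qed (use assms in \<open>auto simp: in_set_conv_nth intro: exI[of _ k]\<close>)

section \<open>Trading chains and diffusion critical agents\<close>

lemma trading_chain_iff_successively:
  "trading_chain E t j xs \<longleftrightarrow>
     distinct (xs @ [j]) \<and> set xs \<subseteq> intermediates E \<and> hd (xs @ [j]) \<in> seller_nbrs E \<and>
     successively (\<lambda>x y. y \<in> shared t x) (xs @ [j])"
  unfolding trading_chain_def successively_conv_nth by (auto simp: nth_append)

lemma trading_chain_Nil: "j \<in> seller_nbrs E \<Longrightarrow> trading_chain E t j []"
  unfolding trading_chain_def by simp

lemma trading_chain_mono:
  "(\<And>x. shared t x \<subseteq> shared t' x) \<Longrightarrow> trading_chain E t j xs \<Longrightarrow> trading_chain E t' j xs"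
  unfolding trading_chain_def by blast

lemma trading_chain_cong:
  "\<forall>x\<in>set xs. shared t x = shared t' x \<Longrightarrow> trading_chain E t j xs \<longleftrightarrow> trading_chain E t' j xs"
  unfolding trading_chain_def by (metis nth_mem)

lemma trading_chain_shared_cong: "shared t = shared t' \<Longrightarrow> trading_chain E t = trading_chain E t'"
  unfolding trading_chain_def by simp

lemma lcc_cong: "trading_chain E t = trading_chain E t' \<Longrightarrow> lcc E t = lcc E t'"
  unfolding lcc_def by simp

lemma trading_chain_take:
  assumes "trading_chain E t j xs" and "k < length xs"
  shows "trading_chain E t (xs ! k) (take k xs)"
proof -
  let ?ys = "take k xs @ [xs ! k]"
  have split: "xs @ [j] = ?ys @ (drop (Suc k) xs @ [j])"
    using assms(2) by (simp add: id_take_nth_drop[symmetric])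
  have "hd ?ys = hd (xs @ [j])"
    unfolding split by (simp add: hd_append)
  moreover have "distinct ?ys" and "successively (\<lambda>x y. y \<in> shared t x) ?ys"
    using assms(1) unfolding trading_chain_iff_successively split successively_append_iff by auto
  moreover have "set (take k xs) \<subseteq> set xs"
    by (rule set_take_subset)
  ultimately show ?thesis
    using assms(1) unfolding trading_chain_iff_successively by auto
qed

lemma chain_cost_conv_sum: "chain_cost E xs = (\<Sum>k<length xs. cost E (xs ! k))"
  unfolding chain_cost_def by (simp add: sum_list_sum_nth atLeast0LessThan)

lemma critical_refl: "critical E t j j"
  unfolding critical_def by simp

lemma critical_trans:
  assumes "critical E t i y" and "critical E t y j"
  shows "critical E t i j"
  unfolding critical_def
proof (intro allI impI)
  fix xs
  assume chain: "trading_chain E t j xs"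
  show "i \<in> set xs \<or> i = j"
  proof (cases "y = j")
    case False
    then obtain k where "k < length xs" "y = xs ! k"
      using assms(2) chain unfolding critical_def by (metis in_set_conv_nth)
    then show ?thesis
      using assms(1) trading_chain_take[OF chain] unfolding critical_def
      by (metis in_set_takeD nth_mem)
  qed (use assms(1) chain in \<open>auto simp: critical_def\<close>)
qed

lemma dset_subset_iff:
  assumes "t y \<noteq> None"
  shows "dset E t y \<subseteq> dset E t x \<longleftrightarrow> critical E t x y"
proof
  assume "dset E t y \<subseteq> dset E t x"
  moreover have "y \<in> dset E t y"
    using assms critical_refl unfolding dset_def by simp
  ultimately show "critical E t x y"
    unfolding dset_def by auto
next
  assume "critical E t x y"
  then show "dset E t y \<subseteq> dset E t x"
    using critical_trans[OF \<open>critical E t x y\<close>] unfolding dset_def by auto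
qed

section \<open>Restricted and realized profiles\<close>

definition profile_le :: "'a profile \<Rightarrow> 'a profile \<Rightarrow> bool" where
  "profile_le t t' \<longleftrightarrow>
     (\<forall>j. t j \<noteq> None \<longrightarrow> t' j \<noteq> None \<and> bid_of t j = bid_of t' j \<and> shared t j \<subseteq> shared t' j)"

lemma shared_None: "t j = None \<Longrightarrow> shared t j = {}"
  unfolding shared_def by simp

lemma shared_without: "shared (without t X) j = (if j \<in> X then {} else shared t j)"
  unfolding shared_def without_def by simp

lemma bid_of_without: "bid_of (without t X) j = (if j \<in> X then 0 else bid_of t j)"
  unfolding bid_of_def without_def by simp

lemma without_eq_None: "without t X j = None \<longleftrightarrow> j \<in> X \<or> t j = None"
  unfolding without_def by simp

lemma without_empty [simp]: "without t {} = t"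
  unfolding without_def by simp

lemma profile_le_refl: "profile_le t t"
  unfolding profile_le_def by simp

lemma profile_le_without:
  assumes "profile_le t t'" and "\<And>j. t j \<noteq> None \<Longrightarrow> j \<notin> X \<Longrightarrow> j \<notin> X'"
  shows "profile_le (without t X) (without t' X')"
  using assms unfolding profile_le_def without_eq_None by (auto simp: shared_without bid_of_without)

lemma profile_le_trading_chain:
  "profile_le t t' \<Longrightarrow> trading_chain E t j xs \<Longrightarrow> trading_chain E t' j xs"
  by (erule trading_chain_mono[rotated]) (metis profile_le_def shared_None empty_subsetI)

lemma realize_trading_chain: "trading_chain E (realize E \<rho>) = trading_chain E (Some \<circ> \<rho>)"
proof (intro ext iffI)
  fix j xs
  show "trading_chain E (realize E \<rho>) j xs \<Longrightarrow> trading_chain E (Some \<circ> \<rho>) j xs"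
    by (rule trading_chain_mono) (auto simp: shared_def realize_def)
  assume chain: "trading_chain E (Some \<circ> \<rho>) j xs"
  have "realize E \<rho> x = Some (\<rho> x)" if "x \<in> set xs" for x
  proof -
    obtain k where "k < length xs" "x = xs ! k"
      using \<open>x \<in> set xs\<close> by (auto simp: in_set_conv_nth)
    then have "trading_chain E (Some \<circ> \<rho>) x (take k xs)"
      using trading_chain_take[OF chain] by simp
    moreover have "x \<in> agents E"
      using that chain unfolding trading_chain_def intermediates_def by blast
    ultimately show ?thesis
      unfolding realize_def by auto
  qed
  then show "trading_chain E (realize E \<rho>) j xs"
    using chain trading_chain_cong[of xs "realize E \<rho>" "Some \<circ> \<rho>"] by (simp add: shared_def)
qed

lemma realize_informed_iff:
  "realize E \<rho> j \<noteq> None \<longleftrightarrow> j \<in> agents E \<and> (\<exists>xs. trading_chain E (Some \<circ> \<rho>) j xs)"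
  unfolding realize_def by simp

lemma realize_informed: "realize E \<rho> j \<noteq> None \<Longrightarrow> realize E \<rho> j = Some (\<rho> j)"
  unfolding realize_def by (auto split: if_splits)

lemma realize_feasible:
  assumes "\<forall>j\<in>agents E. valid_report E r j (\<rho> j)"
  shows "feasible E r (realize E \<rho>)"
  unfolding feasible_def
proof (rule conjI; intro allI impI ballI)
  fix j
  assume "realize E \<rho> j \<noteq> None"
  then show "j \<in> agents E \<and> valid_report E r j (the (realize E \<rho> j))"
    using assms realize_informed[of E \<rho> j] realize_informed_iff[of E \<rho> j] by simp
next
  fix j
  assume "j \<in> agents E"
  then show "realize E \<rho> j \<noteq> None \<longleftrightarrow> (\<exists>xs. trading_chain E (realize E \<rho>) j xs)"
    unfolding realize_trading_chain realize_informed_iff by simp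
qed

lemma trading_chain_bid_update:
  "trading_chain E (Some \<circ> \<rho>(i := Bid v)) = trading_chain E (Some \<circ> \<rho>(i := Bid v'))"
  by (intro trading_chain_shared_cong ext) (simp add: shared_def)

lemma realize_bid_update_other:
  "j \<noteq> i \<Longrightarrow> realize E (\<rho>(i := Bid v)) j = realize E (\<rho>(i := Bid v')) j"
  unfolding realize_def using trading_chain_bid_update[of E \<rho> i v v'] by simp

lemma realize_bid_update_eq_None:
  "realize E (\<rho>(i := Bid v)) i = None \<longleftrightarrow> realize E (\<rho>(i := Bid v')) i = None"
  unfolding realize_def using trading_chain_bid_update[of E \<rho> i v v'] by simp

lemma without_realize_bid_update:
  "without (realize E (\<rho>(i := Bid v))) {i} = without (realize E (\<rho>(i := Bid v'))) {i}"
  unfolding without_def using realize_bid_update_other[of _ i E \<rho> v v'] by (intro ext) simp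

lemma lcc_realize_bid_update: "lcc E (realize E (\<rho>(i := Bid v))) = lcc E (realize E (\<rho>(i := Bid v')))"
proof (intro lcc_cong trading_chain_shared_cong ext)
  fix j
  show "shared (realize E (\<rho>(i := Bid v))) j = shared (realize E (\<rho>(i := Bid v'))) j"
  proof (cases "j = i")
    case True
    then show ?thesis
      by (simp add: shared_def realize_def)
  qed (use realize_bid_update_other[of j i E \<rho> v v'] in \<open>simp add: shared_def\<close>)
qed

section \<open>Averages and the second-highest bid\<close>

lemma sorted_second_largest_le:
  fixes L :: "real list"
  assumes "sorted L" and "2 \<le> length L" and "length (filter (\<lambda>v. V < v) L) \<le> 1"
  shows "L ! (length L - 2) \<le> V"
proof -
  obtain L' x y where L: "L = L' @ [x, y]"
    using assms(2) by (cases L rule: rev_cases; cases "butlast L" rule: rev_cases) auto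
  have "x \<le> y"
    using assms(1) unfolding L by (simp add: sorted_append)
  then have "\<not> V < x"
    using assms(3) unfolding L by auto
  then show ?thesis
    unfolding L by (simp add: nth_append)
qed

lemma vickrey_revenue_le:
  assumes "finite (buyers E \<inter> seller_nbrs E)" and "0 \<le> V"
    and "\<forall>j\<in>buyers E \<inter> seller_nbrs E - {h}. bid_of t j \<le> V"
  shows "vickrey_revenue E t \<le> V"
proof -
  define A where "A = buyers E \<inter> seller_nbrs E"
  define L where "L = sorted_list_of_multiset (image_mset (bid_of t) (mset_set A))"
  have "length (filter (\<lambda>v. V < v) L) =
      size (filter_mset (\<lambda>v. V < v) (image_mset (bid_of t) (mset_set A)))"
    unfolding L_def by (metis mset_filter mset_sorted_list_of_multiset size_mset)
  also have "\<dots> = card {a \<in> A. V < bid_of t a}"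
    using assms(1) unfolding A_def by (simp add: filter_mset_image_mset)
  also have "\<dots> \<le> card {h}"
    using assms(3) unfolding A_def by (intro card_mono) (auto simp: not_le[symmetric])
  finally have "length (filter (\<lambda>v. V < v) L) \<le> 1"
    by simp
  moreover have "length L = card A"
    unfolding L_def by (metis mset_sorted_list_of_multiset size_image_mset size_mset size_mset_set)
  moreover have "sorted L"
    unfolding L_def by simp
  ultimately show ?thesis
    using assms(2) sorted_second_largest_le[of L V]
    unfolding vickrey_revenue_def Let_def A_def[symmetric] L_def[symmetric] by simp
qed

lemma mean_le_mean:
  fixes f g :: "'b \<Rightarrow> real"
  assumes "finite A" and "A \<noteq> {}" and "finite B" and "B \<noteq> {}"
    and "\<And>a b. a \<in> A \<Longrightarrow> b \<in> B \<Longrightarrow> f a \<le> g b"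
  shows "sum f A / card A \<le> sum g B / card B"
proof -
  have "sum f A / card A \<le> g b" if "b \<in> B" for b
    using sum_bounded_above[of A f "g b"] assms(1,2,5) that
    by (simp add: pos_divide_le_eq card_gt_0_iff mult.commute)
  then have "card B * (sum f A / card A) \<le> sum g B"
    using sum_bounded_below[of B "sum f A / card A" g] by simp
  then show ?thesis
    using assms(3,4) by (simp add: le_divide_eq card_gt_0_iff mult.commute)
qed

section \<open>Markets on a tree\<close>

locale tree_market =
  fixes E :: "'a market" and r :: "'a \<Rightarrow> 'a set"
  assumes finite_agents: "finite (agents E)"
    and seller_not_agent: "seller E \<notin> agents E"
    and buyers_agents: "buyers E \<subseteq> agents E"
    and seller_nbrs_agents: "seller_nbrs E \<subseteq> agents E"
    and nbrs_agents: "\<forall>i\<in>intermediates E. r i \<subseteq> agents E"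
    and tree: "is_tree (net_vertices E) (net_edges E r)"
begin

abbreviation adjacent :: "'a \<Rightarrow> 'a \<Rightarrow> bool" where
  "adjacent x y \<equiv> {x, y} \<in> net_edges E r"

lemma intermediates_agents: "intermediates E \<subseteq> agents E"
  unfolding intermediates_def by blast

lemma buyer_not_intermediate: "j \<in> buyers E \<Longrightarrow> j \<notin> intermediates E"
  unfolding intermediates_def by blast

lemma feasible_shared:
  assumes "feasible E r t" and "y \<in> shared t x"
  shows "x \<in> intermediates E" and "y \<in> r x"
proof -
  obtain R where "t x = Some (Share R)" and "y \<in> R"
    using assms(2) unfolding shared_def by (auto split: option.splits report.splits)
  moreover have "valid_report E r x (Share R)"
    using assms(1) \<open>t x = Some (Share R)\<close> unfolding feasible_def by force
  ultimately show "x \<in> intermediates E" and "y \<in> r x"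
    unfolding valid_report_def by auto
qed

lemma feasible_chain_agent:
  assumes "feasible E r t" and "trading_chain E t j xs"
  shows "j \<in> agents E"
proof (cases xs rule: rev_cases)
  case Nil
  then show ?thesis
    using assms(2) seller_nbrs_agents unfolding trading_chain_def by auto
next
  case (snoc ys x)
  then have "j \<in> shared t x" and "x \<in> intermediates E"
    using assms(2) unfolding trading_chain_iff_successively by (auto simp: successively_append_iff)
  then show ?thesis
    using feasible_shared[OF assms(1)] nbrs_agents by blast
qed

lemma feasible_chain_path:
  assumes "feasible E r t" and "trading_chain E t j xs"
  shows "distinct (seller E # xs @ [j])" and "successively adjacent (seller E # xs @ [j])"
proof -
  show "distinct (seller E # xs @ [j])"
    using assms feasible_chain_agent seller_not_agent intermediates_agents
    unfolding trading_chain_def by auto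
  have "adjacent x y" if "y \<in> shared t x" for x y
    using feasible_shared[OF assms(1) that] unfolding net_edges_def by blast
  then have "successively adjacent (xs @ [j])"
    using assms(2) unfolding trading_chain_iff_successively by (blast intro: successively_mono)
  moreover have "adjacent (seller E) (hd (xs @ [j]))"
    using assms(2) unfolding trading_chain_def net_edges_def by blast
  ultimately show "successively adjacent (seller E # xs @ [j])"
    by (simp add: successively_Cons)
qed

lemma trading_chain_unique:
  assumes "feasible E r t" and "trading_chain E t j xs" and "trading_chain E t j ys"
  shows "xs = ys"
proof -
  have "symp adjacent"
    by (auto intro: sympI simp: insert_commute)
  moreover have "\<not> has_cycle adjacent"
    using tree unfolding is_tree_def has_cycle_def successively_conv_nth
    by (metis less_diff_conv Suc_eq_plus1)
  ultimately have "seller E # xs @ [j] = seller E # ys @ [j]"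
    using feasible_chain_path[OF assms(1,2)] feasible_chain_path[OF assms(1,3)]
    by (intro acyclic_path_unique) simp_all
  then show ?thesis
    by simp
qed

lemma lcc_eqI:
  assumes "feasible E r t" and "trading_chain E t j xs"
  shows "lcc E t j = xs"
  unfolding lcc_def by (rule some_equality) (use assms trading_chain_unique in auto)

lemma feasible_informed_iff:
  "feasible E r t \<Longrightarrow> t j \<noteq> None \<longleftrightarrow> (\<exists>xs. trading_chain E t j xs)"
  using feasible_chain_agent unfolding feasible_def by blast

lemma trading_chain_lcc: "feasible E r t \<Longrightarrow> t j \<noteq> None \<Longrightarrow> trading_chain E t j (lcc E t j)"
  using feasible_informed_iff lcc_eqI by metis

lemma lcc_distinct: "feasible E r t \<Longrightarrow> t j \<noteq> None \<Longrightarrow> distinct (lcc E t j @ [j])"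
  using trading_chain_lcc unfolding trading_chain_def by blast

lemma lcc_intermediates: "feasible E r t \<Longrightarrow> t j \<noteq> None \<Longrightarrow> set (lcc E t j) \<subseteq> intermediates E"
  using trading_chain_lcc unfolding trading_chain_def by blast

lemma buyer_notin_lcc: "feasible E r t \<Longrightarrow> t j \<noteq> None \<Longrightarrow> i \<in> buyers E \<Longrightarrow> i \<notin> set (lcc E t j)"
  using lcc_intermediates buyer_not_intermediate by blast

lemma lcc_take:
  assumes "feasible E r t" and "t j \<noteq> None" and "k < length (lcc E t j)"
  shows "t (lcc E t j ! k) \<noteq> None" and "lcc E t (lcc E t j ! k) = take k (lcc E t j)"
  using trading_chain_take[OF trading_chain_lcc[OF assms(1,2)] assms(3)]
    feasible_informed_iff[OF assms(1)] lcc_eqI[OF assms(1)] by blast+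

lemma critical_iff:
  assumes "feasible E r t" and "t j \<noteq> None"
  shows "critical E t i j \<longleftrightarrow> i \<in> set (lcc E t j @ [j])"
proof -
  have "trading_chain E t j xs \<longleftrightarrow> xs = lcc E t j" for xs
    using assms trading_chain_lcc lcc_eqI by metis
  then show ?thesis
    unfolding critical_def by auto
qed

lemma dset_buyer:
  assumes "feasible E r t" and "j \<in> buyers E" and "t j \<noteq> None"
  shows "dset E t j = {j}"
  unfolding dset_def using assms critical_iff buyer_notin_lcc by auto

context
  fixes t m
  assumes feasible: "feasible E r t" and informed: "t m \<noteq> None"
begin

text \<open>The diffusion critical sequence \<open>C_m\<close>, as a list in its order \<open>s_1, ..., s_k, m\<close>.\<close>

abbreviation crit_list :: "'a list" where
  "crit_list \<equiv> lcc E t m @ [m]"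

lemma crit_list_nth_informed: "l \<le> length (lcc E t m) \<Longrightarrow> t (crit_list ! l) \<noteq> None"
  using lcc_take(1)[OF feasible informed] informed by (cases "l = length (lcc E t m)") (auto simp: nth_append)

lemma lcc_crit_list_nth: "l \<le> length (lcc E t m) \<Longrightarrow> lcc E t (crit_list ! l) = take l (lcc E t m)"
  using lcc_take(2)[OF feasible informed] lcc_eqI[OF feasible trading_chain_lcc[OF feasible informed]]
  by (cases "l = length (lcc E t m)") (auto simp: nth_append)

lemma in_set_crit_list_iff: "x \<in> set crit_list \<longleftrightarrow> (\<exists>l \<le> length (lcc E t m). x = crit_list ! l)"
  unfolding in_set_conv_nth by (metis length_append_singleton less_Suc_eq_le)

lemma crit_seq_eq_crit_list: "crit_seq E t m = set crit_list"
proof -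
  have "t x \<noteq> None" if "x \<in> set crit_list" for x
    using that in_set_crit_list_iff crit_list_nth_informed by metis
  then show ?thesis
    unfolding crit_seq_def critical_iff[OF feasible informed] by blast
qed

lemma critical_crit_list_nth_iff:
  assumes "k \<le> length (lcc E t m)" and "l \<le> length (lcc E t m)"
  shows "critical E t (crit_list ! k) (crit_list ! l) \<longleftrightarrow> k \<le> l"
proof -
  have "take (Suc l) crit_list = take l crit_list @ [crit_list ! l]"
    using assms(2) by (intro take_Suc_conv_app_nth) simp
  also have "take l crit_list = lcc E t (crit_list ! l)"
    using assms(2) lcc_crit_list_nth by simp
  finally have "critical E t (crit_list ! k) (crit_list ! l) \<longleftrightarrow>
      crit_list ! k \<in> set (take (Suc l) crit_list)"
    using critical_iff[OF feasible crit_list_nth_informed[OF assms(2)]] by simp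
  also have "\<dots> \<longleftrightarrow> k < Suc l"
    using assms(1) by (intro distinct_nth_in_set_take_iff lcc_distinct feasible informed) simp
  finally show ?thesis
    by (simp add: less_Suc_eq_le)
qed

lemma dset_crit_list_nth_subset_iff:
  "k \<le> length (lcc E t m) \<Longrightarrow> l \<le> length (lcc E t m) \<Longrightarrow>
     dset E t (crit_list ! l) \<subseteq> dset E t (crit_list ! k) \<longleftrightarrow> k \<le> l"
  by (simp add: dset_subset_iff crit_list_nth_informed critical_crit_list_nth_iff)

lemma crit_succ_crit_list_nth:
  assumes "k < length (lcc E t m)"
  shows "crit_succ E t m (crit_list ! k) = crit_list ! Suc k"
  unfolding crit_succ_def
proof (rule the_equality)
  have psubset_iff: "dset E t (crit_list ! l) \<subset> dset E t (crit_list ! k) \<longleftrightarrow> k < l"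
    if "l \<le> length (lcc E t m)" for l
    using that assms dset_crit_list_nth_subset_iff[of k l] dset_crit_list_nth_subset_iff[of l k] by auto
  have succ: "crit_list ! Suc k \<in> crit_seq E t m"
    unfolding crit_seq_eq_crit_list in_set_crit_list_iff using assms by (metis Suc_leI)
  show "crit_list ! Suc k \<in> crit_seq E t m \<and>
      dset E t (crit_list ! Suc k) \<subset> dset E t (crit_list ! k) \<and>
      (\<forall>x\<in>crit_seq E t m. dset E t x \<subset> dset E t (crit_list ! k) \<longrightarrow>
         dset E t x \<subseteq> dset E t (crit_list ! Suc k))"
  proof (intro conjI ballI impI succ)
    show "dset E t (crit_list ! Suc k) \<subset> dset E t (crit_list ! k)"
      using assms psubset_iff by simp
    fix x
    assume "x \<in> crit_seq E t m" and "dset E t x \<subset> dset E t (crit_list ! k)"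
    then obtain l where "l \<le> length (lcc E t m)" "x = crit_list ! l" "k < l"
      unfolding crit_seq_eq_crit_list in_set_crit_list_iff using psubset_iff by blast
    then show "dset E t x \<subseteq> dset E t (crit_list ! Suc k)"
      using dset_crit_list_nth_subset_iff[of "Suc k" l] by simp
  qed
  fix x
  assume x: "x \<in> crit_seq E t m \<and> dset E t x \<subset> dset E t (crit_list ! k) \<and>
      (\<forall>y\<in>crit_seq E t m. dset E t y \<subset> dset E t (crit_list ! k) \<longrightarrow>
         dset E t y \<subseteq> dset E t x)"
  then obtain l where l: "l \<le> length (lcc E t m)" "x = crit_list ! l" "k < l"
    unfolding crit_seq_eq_crit_list in_set_crit_list_iff using psubset_iff by blast
  have "dset E t (crit_list ! Suc k) \<subseteq> dset E t x"
    using x succ psubset_iff[of "Suc k"] assms by simp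
  then have "l = Suc k"
    using l assms dset_crit_list_nth_subset_iff[of l "Suc k"] by simp
  then show "x = crit_list ! Suc k"
    using l by simp
qed

lemma
  assumes "i \<in> set (lcc E t m)"
  shows crit_succ_in_crit_list: "crit_succ E t m i \<in> set crit_list"
    and dset_crit_succ_subset: "dset E t (crit_succ E t m i) \<subseteq> dset E t i"
    and lcc_crit_succ: "lcc E t (crit_succ E t m i) = lcc E t i @ [i]"
proof -
  obtain k where k: "k < length (lcc E t m)" and i: "i = crit_list ! k"
    using assms by (auto simp: in_set_conv_nth nth_append)
  then show "crit_succ E t m i \<in> set crit_list"
    using crit_succ_crit_list_nth in_set_crit_list_iff by (metis Suc_leI)
  show "dset E t (crit_succ E t m i) \<subseteq> dset E t i"
    using k i crit_succ_crit_list_nth dset_crit_list_nth_subset_iff by simp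
  have "take (Suc k) (lcc E t m) = take k (lcc E t m) @ [i]"
    using k i by (simp add: take_Suc_conv_app_nth nth_append)
  then show "lcc E t (crit_succ E t m i) = lcc E t i @ [i]"
    using k i crit_succ_crit_list_nth lcc_crit_list_nth by simp
qed

lemma lcc_inj_on_crit_list:
  assumes "x \<in> set crit_list" and "y \<in> set crit_list" and "lcc E t x = lcc E t y"
  shows "x = y"
proof -
  obtain k l where k: "k \<le> length (lcc E t m)" "x = crit_list ! k"
    and l: "l \<le> length (lcc E t m)" "y = crit_list ! l"
    using assms(1,2) unfolding in_set_crit_list_iff by blast
  then have "length (take k (lcc E t m)) = length (take l (lcc E t m))"
    using assms(3) lcc_crit_list_nth by metis
  then show ?thesis
    using k l by simp
qed

end

section \<open>Optimal welfare\<close>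

definition welfares :: "'a profile \<Rightarrow> real set" where
  "welfares t = {bid_of t j - chain_cost E xs | j xs.
                   j \<in> buyers E \<and> t j \<noteq> None \<and> trading_chain E t j xs}"

lemma finite_welfares: "finite (welfares t)"
proof (rule finite_subset)
  show "welfares t \<subseteq> (\<lambda>(j, xs). bid_of t j - chain_cost E xs) `
      (buyers E \<times> {xs. set xs \<subseteq> agents E \<and> distinct xs})"
  proof
    fix v
    assume "v \<in> welfares t"
    then obtain j xs where "v = bid_of t j - chain_cost E xs" "j \<in> buyers E" "trading_chain E t j xs"
      unfolding welfares_def by blast
    moreover have "set xs \<subseteq> agents E \<and> distinct xs"
      using \<open>trading_chain E t j xs\<close> intermediates_agents unfolding trading_chain_def by auto
    ultimately show "v \<in> (\<lambda>(j, xs). bid_of t j - chain_cost E xs) `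
        (buyers E \<times> {xs. set xs \<subseteq> agents E \<and> distinct xs})"
      by force
  qed
  show "finite \<dots>"
    using finite_agents buyers_agents finite_subset finite_subset_distinct by blast
qed

lemma Wstar_eq_Max: "Wstar E t = Max (insert 0 (welfares t))"
  unfolding Wstar_def welfares_def ..

lemma Wstar_ge:
  "j \<in> buyers E \<Longrightarrow> t j \<noteq> None \<Longrightarrow> trading_chain E t j xs \<Longrightarrow>
     bid_of t j - chain_cost E xs \<le> Wstar E t"
  unfolding Wstar_eq_Max by (rule Max_ge) (use finite_welfares in \<open>auto simp: welfares_def\<close>)

lemma Wstar_nonneg: "0 \<le> Wstar E t"
  unfolding Wstar_eq_Max using finite_welfares by simp

lemma Wstar_le:
  assumes "0 \<le> M"
    and "\<And>j xs. j \<in> buyers E \<Longrightarrow> t j \<noteq> None \<Longrightarrow> trading_chain E t j xs \<Longrightarrow>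
           bid_of t j - chain_cost E xs \<le> M"
  shows "Wstar E t \<le> M"
  unfolding Wstar_eq_Max using finite_welfares assms by (auto simp: welfares_def)

lemma Wstar_mono:
  assumes "profile_le t t'"
  shows "Wstar E t \<le> Wstar E t'"
proof (rule Wstar_le[OF Wstar_nonneg])
  fix j xs
  assume "j \<in> buyers E" "t j \<noteq> None" "trading_chain E t j xs"
  then show "bid_of t j - chain_cost E xs \<le> Wstar E t'"
    using assms Wstar_ge[of j t' xs] profile_le_trading_chain unfolding profile_le_def by metis
qed

lemma Wstar_without_antimono: "X \<subseteq> Y \<Longrightarrow> Wstar E (without t Y) \<le> Wstar E (without t X)"
  by (intro Wstar_mono profile_le_without profile_le_refl) auto

lemma Wstar_without_le: "Wstar E (without t X) \<le> Wstar E t"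
  using Wstar_without_antimono[of "{}" X t] by simp

lemma winnersD:
  assumes "m \<in> winners E t"
  shows "m \<in> buyers E" "t m \<noteq> None" "0 \<le> SW E t m"
    "\<And>j. j \<in> buyers E \<Longrightarrow> t j \<noteq> None \<Longrightarrow> SW E t j \<le> SW E t m"
  using assms unfolding winners_def informed_buyers_def by auto

lemma SW_le_Wstar: "feasible E r t \<Longrightarrow> j \<in> buyers E \<Longrightarrow> t j \<noteq> None \<Longrightarrow> SW E t j \<le> Wstar E t"
  unfolding SW_def by (rule Wstar_ge) (simp_all add: trading_chain_lcc)

lemma Wstar_winner:
  assumes "feasible E r t" and "m \<in> winners E t"
  shows "Wstar E t = SW E t m"
proof (rule antisym)
  show "Wstar E t \<le> SW E t m"
  proof (rule Wstar_le)
    fix j xs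
    assume j: "j \<in> buyers E" "t j \<noteq> None" "trading_chain E t j xs"
    then have "SW E t j = bid_of t j - chain_cost E xs"
      unfolding SW_def using lcc_eqI[OF assms(1)] by simp
    then show "bid_of t j - chain_cost E xs \<le> SW E t m"
      using winnersD(4)[OF assms(2) j(1,2)] by simp
  qed (rule winnersD(3)[OF assms(2)])
  show "SW E t m \<le> Wstar E t"
    using SW_le_Wstar[OF assms(1) winnersD(1,2)[OF assms(2)]] .
qed

lemma winners_nonempty:
  assumes "feasible E r t" and "j \<in> buyers E" and "t j \<noteq> None" and "0 \<le> SW E t j"
  shows "winners E t \<noteq> {}"
proof -
  let ?I = "informed_buyers E t"
  have j: "j \<in> ?I"
    using assms unfolding informed_buyers_def by simp
  have "?I \<subseteq> agents E"
    using buyers_agents unfolding informed_buyers_def by blast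
  then have "finite ?I"
    using finite_agents by (rule finite_subset)
  then have fin: "finite (SW E t ` ?I)"
    by (rule finite_imageI)
  have "Max (SW E t ` ?I) \<in> SW E t ` ?I"
    using fin j by (intro Max_in) auto
  then obtain m where m: "m \<in> ?I" and max: "SW E t m = Max (SW E t ` ?I)"
    by (metis imageE)
  have greatest: "\<forall>i\<in>?I. SW E t i \<le> SW E t m"
    unfolding max using fin by simp
  then have "0 \<le> SW E t m"
    using j assms(4) by force
  then have "m \<in> winners E t"
    using m greatest unfolding winners_def by blast
  then show ?thesis
    by blast
qed

lemma Wstar_no_winner:
  assumes "feasible E r t" and "winners E t = {}"
  shows "Wstar E t = 0"
proof (rule antisym[OF Wstar_le Wstar_nonneg])
  fix j xs
  assume j: "j \<in> buyers E" "t j \<noteq> None" "trading_chain E t j xs"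
  then have "SW E t j = bid_of t j - chain_cost E xs"
    unfolding SW_def using lcc_eqI[OF assms(1)] by simp
  moreover have "\<not> 0 \<le> SW E t j"
    using winners_nonempty[OF assms(1) j(1,2)] assms(2) by blast
  ultimately show "bid_of t j - chain_cost E xs \<le> 0"
    by linarith
qed simp

lemma outcomes_cases:
  assumes "w \<in> outcomes E t"
  obtains "w = None" and "winners E t = {}" | m where "w = Some m" and "m \<in> winners E t"
  using assms unfolding outcomes_def by (auto split: if_splits)

lemma outcomes_Some: "Some m \<in> outcomes E t \<Longrightarrow> m \<in> winners E t"
  unfolding outcomes_def by (auto split: if_splits)

lemma outcomes_finite_nonempty: "finite (outcomes E t)" "outcomes E t \<noteq> {}"
proof -
  have "winners E t \<subseteq> agents E"
    using buyers_agents unfolding winners_def informed_buyers_def by auto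
  then have "finite (winners E t)"
    using finite_agents by (rule finite_subset)
  then show "finite (outcomes E t)"
    unfolding outcomes_def by simp
qed (simp add: outcomes_def)

lemma SW_le_Wstar_without_dset:
  assumes "feasible E r t" and "j \<in> buyers E" and "t j \<noteq> None" and "z \<notin> set (lcc E t j @ [j])"
  shows "SW E t j \<le> Wstar E (without t (dset E t z))"
proof -
  let ?t = "without t (dset E t z)"
  have survives: "y \<notin> dset E t z" if "y \<in> set (lcc E t j @ [j])" for y
  proof
    assume "y \<in> dset E t z"
    then have "critical E t z y"
      unfolding dset_def by simp
    moreover have "critical E t y j"
      using that critical_iff[OF assms(1,3)] by simp
    ultimately have "critical E t z j"
      by (rule critical_trans)
    then show False
      using assms(4) critical_iff[OF assms(1,3)] by simp
  qed
  then have chain: "trading_chain E ?t j (lcc E t j)"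
    using trading_chain_lcc[OF assms(1,3)] trading_chain_cong[of "lcc E t j" ?t t]
    by (simp add: shared_without)
  have "?t j \<noteq> None" and bid: "bid_of ?t j = bid_of t j"
    using survives[of j] assms(3) by (simp_all add: without_eq_None bid_of_without)
  then show ?thesis
    unfolding SW_def using Wstar_ge[OF assms(2) _ chain] by simp
qed

lemma Wstar_le_without_dset_off_chain:
  assumes "feasible E r t" and "w \<in> outcomes E t"
    and "\<And>m. w = Some m \<Longrightarrow> i \<notin> set (lcc E t m @ [m])"
  shows "Wstar E t \<le> Wstar E (without t (dset E t i))"
  using assms(2)
proof (cases rule: outcomes_cases)
  case 1
  then show ?thesis
    using Wstar_no_winner[OF assms(1)] Wstar_nonneg by simp
next
  case (2 m)
  then show ?thesis
    using Wstar_winner[OF assms(1)] SW_le_Wstar_without_dset[OF assms(1)] winnersD assms(3) by metis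
qed

lemma winner_chain_agents:
  assumes "feasible E r t" and "m \<in> winners E t"
  shows "set (lcc E t m @ [m]) \<subseteq> agents E"
  using lcc_intermediates[OF assms(1) winnersD(2)[OF assms(2)]] winnersD(1)[OF assms(2)]
    buyers_agents intermediates_agents by auto

lemma winner_notin_lcc: "feasible E r t \<Longrightarrow> m \<in> winners E t \<Longrightarrow> m \<notin> set (lcc E t m)"
  using buyer_notin_lcc winnersD by blast

section \<open>Efficiency, revenue and budget balance\<close>

lemma sum_agents_winner_chain:
  assumes "feasible E r t" and "m \<in> winners E t"
    and "\<And>i. i \<notin> set (lcc E t m @ [m]) \<Longrightarrow> f i = 0"
  shows "(\<Sum>i\<in>agents E. f i) = f m + (\<Sum>k<length (lcc E t m). f (lcc E t m ! k))"
proof -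
  have "(\<Sum>i\<in>agents E. f i) = (\<Sum>i\<in>set (lcc E t m @ [m]). f i)"
    using assms winner_chain_agents[OF assms(1,2)] finite_agents
    by (intro sum.mono_neutral_right) auto
  also have "\<dots> = sum_list (map f (lcc E t m @ [m]))"
    using lcc_distinct[OF assms(1) winnersD(2)[OF assms(2)]] by (rule sum.distinct_set_conv_list)
  also have "\<dots> = f m + sum_list (map f (lcc E t m))"
    by (simp add: add.commute)
  also have "sum_list (map f (lcc E t m)) = (\<Sum>k<length (lcc E t m). f (lcc E t m ! k))"
    by (simp add: sum_list_sum_nth atLeast0LessThan)
  finally show ?thesis .
qed

lemma social_welfare_winner:
  assumes "feasible E r t" and "m \<in> winners E t"
  shows "social_welfare E t (Some m) = SW E t m"
proof -
  have "lcc E t m ! k \<noteq> m" if "k < length (lcc E t m)" for k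
    using that winner_notin_lcc[OF assms] nth_mem by metis
  then have "social_welfare E t (Some m) = bid_of t m + (\<Sum>k<length (lcc E t m). - cost E (lcc E t m ! k))"
    unfolding social_welfare_def using assms
    by (subst sum_agents_winner_chain) (auto simp: reported_value_def alloc_def)
  then show ?thesis
    unfolding SW_def chain_cost_conv_sum by (simp add: sum_negf)
qed

lemma efficient: "efficient E r"
  unfolding efficient_def
proof (intro allI impI ballI)
  fix t w
  assume "feasible E r t" and "w \<in> outcomes E t"
  from \<open>w \<in> outcomes E t\<close> show "social_welfare E t w = Wstar E t"
  proof (cases rule: outcomes_cases)
    case 1
    then show ?thesis
      using Wstar_no_winner[OF \<open>feasible E r t\<close>]
      by (simp add: social_welfare_def reported_value_def alloc_def)
  qed (simp add: Wstar_winner social_welfare_winner \<open>feasible E r t\<close>)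
qed

lemma payment_on_chain:
  assumes "feasible E r t" and "m \<in> winners E t" and "i \<in> set (lcc E t m)"
  shows "payment E t (Some m) i =
    Wstar E (without t (dset E t i)) - Wstar E (without t (dset E t (crit_succ E t m i))) - cost E i"
  using assms winner_notin_lcc[OF assms(1,2)] crit_seq_eq_crit_list[OF assms(1) winnersD(2)[OF assms(2)]]
  unfolding payment_def by auto

lemma payment_off_chain:
  assumes "feasible E r t" and "m \<in> winners E t" and "i \<notin> set (lcc E t m @ [m])"
  shows "payment E t (Some m) i = 0"
  using assms crit_seq_eq_crit_list[OF assms(1) winnersD(2)[OF assms(2)]] unfolding payment_def by auto

text \<open>The payments telescope along the diffusion critical sequence.\<close>

lemma revenue_winner:
  assumes "feasible E r t" and "m \<in> winners E t"
  shows "revenue E t (Some m) = Wstar E (without t (dset E t ((lcc E t m @ [m]) ! 0)))"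
proof -
  let ?xs = "lcc E t m"
  define g where "g k = Wstar E (without t (dset E t ((?xs @ [m]) ! k)))" for k
  have informed: "t m \<noteq> None"
    using winnersD[OF assms(2)] by blast
  have "payment E t (Some m) (?xs ! k) = g k - g (Suc k) - cost E (?xs ! k)"
    if "k < length ?xs" for k
    using that payment_on_chain[OF assms] crit_succ_crit_list_nth[OF assms(1) informed]
    unfolding g_def by (simp add: nth_append)
  moreover have "payment E t (Some m) m = g (length ?xs) + chain_cost E ?xs"
    using dset_buyer[OF assms(1)] winnersD[OF assms(2)] unfolding payment_def g_def by simp
  moreover have "revenue E t (Some m) =
      payment E t (Some m) m + (\<Sum>k<length ?xs. payment E t (Some m) (?xs ! k))"
    unfolding revenue_def by (rule sum_agents_winner_chain[OF assms payment_off_chain[OF assms]])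
  ultimately have "revenue E t (Some m) =
      g (length ?xs) + chain_cost E ?xs + (\<Sum>k<length ?xs. g k - g (Suc k) - cost E (?xs ! k))"
    by simp
  also have "\<dots> = g 0"
    using sum_lessThan_telescope'[of g "length ?xs"] by (simp add: sum_subtractf chain_cost_conv_sum)
  finally show ?thesis
    unfolding g_def .
qed

lemma weakly_budget_balanced: "weakly_budget_balanced E r"
  unfolding weakly_budget_balanced_def
proof (intro allI impI ballI)
  fix t w
  assume "feasible E r t" and "w \<in> outcomes E t"
  from \<open>w \<in> outcomes E t\<close> show "0 \<le> revenue E t w"
  proof (cases rule: outcomes_cases)
    case 1
    then show ?thesis
      by (simp add: revenue_def payment_def)
  qed (simp add: revenue_winner[OF \<open>feasible E r t\<close>] Wstar_nonneg)
qed

lemma seller_nbr_buyer: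
  assumes "feasible E r t" and "j \<in> buyers E \<inter> seller_nbrs E"
  shows "t j \<noteq> None" and "lcc E t j = []"
proof -
  have chain: "trading_chain E t j []"
    using assms(2) by (simp add: trading_chain_Nil)
  then show "t j \<noteq> None"
    using feasible_informed_iff[OF assms(1)] by blast
  show "lcc E t j = []"
    using lcc_eqI[OF assms(1) chain] .
qed

lemma seller_nbr_bid_le_Wstar_without_dset:
  assumes "feasible E r t" and j: "j \<in> buyers E \<inter> seller_nbrs E" and "j \<noteq> h"
  shows "bid_of t j \<le> Wstar E (without t (dset E t h))"
proof -
  let ?t = "without t (dset E t h)"
  have "\<not> critical E t h j"
    using assms critical_iff[OF assms(1) seller_nbr_buyer(1)[OF assms(1,2)]]
    by (auto simp: seller_nbr_buyer(2)[OF assms(1,2)])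
  then have "?t j \<noteq> None" and "bid_of ?t j = bid_of t j"
    using seller_nbr_buyer(1)[OF assms(1,2)] by (auto simp: dset_def without_eq_None bid_of_without)
  moreover have "trading_chain E ?t j []"
    using j by (simp add: trading_chain_Nil)
  ultimately show ?thesis
    using Wstar_ge[of j ?t "[]"] j by (simp add: chain_cost_def)
qed

lemma vickrey_le_revenue:
  assumes "feasible E r t" and "w \<in> outcomes E t"
  shows "vickrey_revenue E t \<le> revenue E t w"
proof -
  have fin: "finite (buyers E \<inter> seller_nbrs E)"
    using finite_agents buyers_agents by (meson finite_Int finite_subset)
  from assms(2) show ?thesis
  proof (cases rule: outcomes_cases)
    case 1
    have "bid_of t j \<le> 0" if j: "j \<in> buyers E \<inter> seller_nbrs E" for j
    proof -
      have "trading_chain E t j []"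
        using j by (simp add: trading_chain_Nil)
      then show ?thesis
        using j Wstar_ge[of j t "[]"] seller_nbr_buyer(1)[OF assms(1) j] Wstar_no_winner[OF assms(1) 1(2)]
        by (simp add: chain_cost_def)
    qed
    then have "vickrey_revenue E t \<le> 0"
      by (intro vickrey_revenue_le[OF fin]) auto
    then show ?thesis
      using 1 by (simp add: revenue_def payment_def)
  next
    case (2 m)
    let ?h = "(lcc E t m @ [m]) ! 0"
    have "vickrey_revenue E t \<le> Wstar E (without t (dset E t ?h))"
      using seller_nbr_bid_le_Wstar_without_dset[OF assms(1)]
      by (intro vickrey_revenue_le[OF fin Wstar_nonneg]) blast
    then show ?thesis
      using 2 revenue_winner[OF assms(1)] by simp
  qed
qed

section \<open>Individual rationality and incentive compatibility\<close>

lemma utility_None: "utility E b t None i = 0"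
  unfolding utility_def true_value_def payment_def alloc_def by simp

lemma utility_winner:
  "utility E b t (Some m) m = b m - Wstar E (without t {m}) - chain_cost E (lcc E t m)"
  unfolding utility_def true_value_def payment_def alloc_def by simp

lemma utility_off_chain:
  assumes "feasible E r t" and "m \<in> winners E t" and "i \<notin> set (lcc E t m @ [m])"
  shows "utility E b t (Some m) i = 0"
  using assms payment_off_chain[OF assms] unfolding utility_def true_value_def alloc_def by auto

lemma utility_on_chain:
  assumes "feasible E r t" and "m \<in> winners E t" and "i \<in> set (lcc E t m)"
  shows "utility E b t (Some m) i =
    Wstar E (without t (dset E t (crit_succ E t m i))) - Wstar E (without t (dset E t i))"
  using assms payment_on_chain[OF assms] winner_notin_lcc[OF assms(1,2)]
  unfolding utility_def true_value_def alloc_def by auto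

lemma utility_intermediate_nonneg:
  assumes "feasible E r t" and "i \<in> intermediates E" and "w \<in> outcomes E t"
  shows "0 \<le> utility E b t w i"
  using assms(3)
proof (cases rule: outcomes_cases)
  case (2 m)
  show ?thesis
  proof (cases "i \<in> set (lcc E t m)")
    case True
    then have "dset E t (crit_succ E t m i) \<subseteq> dset E t i"
      using dset_crit_succ_subset[OF assms(1)] winnersD(2)[OF 2(2)] by blast
    then show ?thesis
      using 2 True utility_on_chain[OF assms(1)] Wstar_without_antimono by simp
  next
    case False
    then show ?thesis
      using 2 assms(2) winnersD(1) buyer_not_intermediate utility_off_chain[OF assms(1)] by force
  qed
qed (simp add: utility_None)

lemma utility_buyer:
  assumes "feasible E r t" and "i \<in> buyers E" and "w \<in> outcomes E t"
  shows "utility E b t w i =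
    (if w = Some i then b i - Wstar E (without t {i}) - chain_cost E (lcc E t i) else 0)"
  using assms(3)
proof (cases rule: outcomes_cases)
  case (2 m)
  then show ?thesis
    using utility_winner utility_off_chain[OF assms(1)] buyer_notin_lcc[OF assms(1)] assms(2) winnersD
    by (cases "m = i") auto
qed (simp add: utility_None)

lemma utility_truthful_buyer_nonneg:
  assumes "feasible E r t" and "i \<in> buyers E" and "t i = Some (Bid (b i))" and "w \<in> outcomes E t"
  shows "0 \<le> utility E b t w i"
proof (cases "w = Some i")
  case True
  then have "i \<in> winners E t"
    using assms(4) outcomes_Some by blast
  then have "b i - chain_cost E (lcc E t i) = Wstar E t"
    using Wstar_winner[OF assms(1)] assms(3) unfolding SW_def bid_of_def by simp
  then show ?thesis
    using True utility_buyer[OF assms(1,2,4)] Wstar_without_le[of t "{i}"] by simp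
qed (simp add: utility_buyer[OF assms(1,2,4)])

lemma individually_rational: "individually_rational E b r"
  unfolding individually_rational_def
  using utility_truthful_buyer_nonneg utility_intermediate_nonneg by blast

lemma winners_eq_singleton:
  assumes "feasible E r t" and "i \<in> buyers E" and "t i \<noteq> None"
    and "Wstar E (without t {i}) < SW E t i"
  shows "winners E t = {i}"
proof -
  have unique: "m = i" if m: "m \<in> winners E t" for m
  proof (rule ccontr)
    assume "m \<noteq> i"
    then have "i \<notin> set (lcc E t m @ [m])"
      using buyer_notin_lcc[OF assms(1) winnersD(2)[OF m] assms(2)] by simp
    then have "SW E t m \<le> Wstar E (without t (dset E t i))"
      by (rule SW_le_Wstar_without_dset[OF assms(1) winnersD(1,2)[OF m]])
    then show False
      using winnersD(4)[OF m assms(2,3)] assms(4) dset_buyer[OF assms(1,2,3)] by simp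
  qed
  have "0 \<le> SW E t i"
    using assms(4) Wstar_nonneg[of "without t {i}"] by linarith
  then have "winners E t \<noteq> {}"
    by (rule winners_nonempty[OF assms(1,2,3)])
  then show ?thesis
    using unique by blast
qed

lemma utility_truthful_buyer:
  assumes "feasible E r t" and "i \<in> buyers E" and "t i = Some (Bid (b i))" and "w \<in> outcomes E t"
  shows "utility E b t w i = max 0 (b i - Wstar E (without t {i}) - chain_cost E (lcc E t i))"
    (is "_ = max 0 ?S")
proof (cases "0 < ?S")
  case True
  have "SW E t i = ?S + Wstar E (without t {i})"
    using assms(3) unfolding SW_def bid_of_def by simp
  then have "winners E t = {i}"
    using True assms(3) by (intro winners_eq_singleton[OF assms(1,2)]) simp_all
  then have "w = Some i"
    using assms(4) unfolding outcomes_def by simp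
  then show ?thesis
    using True utility_buyer[OF assms(1,2,4)] by simp
next
  case False
  have "w = Some i \<Longrightarrow> ?S = 0"
    using False utility_buyer[OF assms(1,2,4)] utility_truthful_buyer_nonneg[where b = b, OF assms] by simp
  then show ?thesis
    using False utility_buyer[OF assms(1,2,4)] by auto
qed

lemma expected_utility_le:
  assumes "\<And>w w'. w \<in> outcomes E t \<Longrightarrow> w' \<in> outcomes E t' \<Longrightarrow>
             utility E b t w i \<le> utility E b t' w' i"
  shows "expected_utility E b t i \<le> expected_utility E b t' i"
  unfolding expected_utility_def
  by (rule mean_le_mean[OF outcomes_finite_nonempty outcomes_finite_nonempty assms])

lemma incentive_compatible_buyer:
  assumes valid: "\<forall>j\<in>agents E. valid_report E r j (\<rho> j)" and i: "i \<in> buyers E"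
    and "0 \<le> b i" and x: "valid_report E r i x"
  shows "expected_utility E b (realize E (\<rho>(i := x))) i
           \<le> expected_utility E b (realize E (\<rho>(i := Bid (b i)))) i"
proof (rule expected_utility_le)
  let ?t' = "realize E (\<rho>(i := x))" and ?t = "realize E (\<rho>(i := Bid (b i)))"
  let ?S = "b i - Wstar E (without ?t {i}) - chain_cost E (lcc E ?t i)"
  obtain v where v: "x = Bid v"
    using x i unfolding valid_report_def intermediates_def by auto
  have feasible': "feasible E r ?t'" and feasible: "feasible E r ?t"
    using valid x i \<open>0 \<le> b i\<close> by (auto intro!: realize_feasible simp: valid_report_def)
  have same: "?t' i = None \<longleftrightarrow> ?t i = None" "lcc E ?t' = lcc E ?t"
    "without ?t' {i} = without ?t {i}"
    unfolding v by (rule realize_bid_update_eq_None lcc_realize_bid_update without_realize_bid_update)+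
  fix w' w
  assume w': "w' \<in> outcomes E ?t'" and w: "w \<in> outcomes E ?t"
  have "w' = Some i \<Longrightarrow> ?t' i \<noteq> None" and "w = Some i \<Longrightarrow> ?t i \<noteq> None"
    using w' w outcomes_Some winnersD(2) by blast+
  then have "utility E b ?t' w' i = (if w' = Some i then ?S else 0)"
    and "?t i = None \<Longrightarrow> utility E b ?t' w' i = 0 \<and> utility E b ?t w i = 0"
    using utility_buyer[OF feasible' i w'] utility_buyer[OF feasible i w] same by auto
  moreover have "?t i \<noteq> None \<Longrightarrow> utility E b ?t w i = max 0 ?S"
    using utility_truthful_buyer[OF feasible i _ w] realize_informed by fastforce
  ultimately show "utility E b ?t' w' i \<le> utility E b ?t w i"
    by (cases "?t i = None") auto
qed

end

locale sharing_deviation = tree_market +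
  fixes \<rho> :: "'a \<Rightarrow> 'a report" and i :: 'a and R :: "'a set"
  assumes valid: "\<forall>j\<in>agents E. valid_report E r j (\<rho> j)"
    and intermediate: "i \<in> intermediates E" and R_subset: "R \<subseteq> r i"
begin

abbreviation t_dev :: "'a profile" where
  "t_dev \<equiv> realize E (\<rho>(i := Share R))"

abbreviation t_true :: "'a profile" where
  "t_true \<equiv> realize E (\<rho>(i := Share (r i)))"

lemma feasible_dev: "feasible E r t_dev" and feasible_true: "feasible E r t_true"
  using valid intermediate R_subset intermediates_agents
  by (auto intro!: realize_feasible simp: valid_report_def)

lemma chain_dev_imp_true: "trading_chain E t_dev j xs \<Longrightarrow> trading_chain E t_true j xs"
  unfolding realize_trading_chain
  by (rule trading_chain_mono[rotated]) (use R_subset in \<open>auto simp: shared_def\<close>)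

lemma chain_true_imp_dev: "trading_chain E t_true j xs \<Longrightarrow> i \<notin> set xs \<Longrightarrow> trading_chain E t_dev j xs"
  unfolding realize_trading_chain
  by (subst trading_chain_cong[of xs _ "Some \<circ> \<rho>(i := Share (r i))"]) (auto simp: shared_def)

lemma informed_dev_imp_true: "t_dev j \<noteq> None \<Longrightarrow> t_true j \<noteq> None"
  using chain_dev_imp_true feasible_informed_iff[OF feasible_dev] feasible_informed_iff[OF feasible_true]
  by blast

lemma informed_true_imp_dev: "t_true j \<noteq> None \<Longrightarrow> i \<notin> set (lcc E t_true j) \<Longrightarrow> t_dev j \<noteq> None"
  using chain_true_imp_dev trading_chain_lcc[OF feasible_true] feasible_informed_iff[OF feasible_dev]
  by blast

lemma lcc_dev_eq: "t_dev j \<noteq> None \<Longrightarrow> lcc E t_dev j = lcc E t_true j"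
  using trading_chain_lcc[OF feasible_dev] chain_dev_imp_true lcc_eqI[OF feasible_true] by metis

lemma dset_dev_iff: "t_dev j \<noteq> None \<Longrightarrow> j \<in> dset E t_dev c \<longleftrightarrow> j \<in> dset E t_true c"
  unfolding dset_def
  using critical_iff[OF feasible_dev] critical_iff[OF feasible_true] informed_dev_imp_true lcc_dev_eq by simp

lemma profile_le_dev_true: "profile_le t_dev t_true"
  unfolding profile_le_def
proof (intro allI impI)
  fix j
  assume informed: "t_dev j \<noteq> None"
  then have "t_true j \<noteq> None"
    by (rule informed_dev_imp_true)
  then have "t_dev j = Some ((\<rho>(i := Share R)) j)" and "t_true j = Some ((\<rho>(i := Share (r i))) j)"
    using informed by (simp_all add: realize_informed)
  then show "t_true j \<noteq> None \<and> bid_of t_dev j = bid_of t_true j \<and> shared t_dev j \<subseteq> shared t_true j"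
    using R_subset by (cases "j = i") (auto simp: bid_of_def shared_def)
qed

lemma t_dev_eq_t_true:
  assumes "j \<noteq> i" and "t_dev j \<noteq> None"
  shows "t_dev j = t_true j"
  using assms informed_dev_imp_true[OF assms(2)] realize_informed[of E "\<rho>(i := Share R)" j]
    realize_informed[of E "\<rho>(i := Share (r i))" j]
  by simp

lemma without_dset_dev: "without t_dev (dset E t_dev i) = without t_true (dset E t_true i)"
proof
  fix j
  show "without t_dev (dset E t_dev i) j = without t_true (dset E t_true i) j"
  proof (cases "t_dev j = None")
    case True
    have "j \<in> dset E t_true i" if "t_true j \<noteq> None"
    proof -
      have "i \<in> set (lcc E t_true j)"
        using True informed_true_imp_dev that by blast
      then show ?thesis
        using that critical_iff[OF feasible_true] unfolding dset_def by simp
    qed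
    then show ?thesis
      using True by (cases "t_true j") (auto simp: without_def)
  next
    case False
    then have informed: "t_true j \<noteq> None"
      by (rule informed_dev_imp_true)
    show ?thesis
    proof (cases "j \<in> dset E t_true i")
      case True
      then show ?thesis
        using dset_dev_iff[OF False] by (simp add: without_def)
    next
      case not_in: False
      then have "j \<noteq> i"
        using informed unfolding dset_def by (auto simp: critical_refl)
      then have "t_dev j = t_true j"
        using False by (rule t_dev_eq_t_true)
      then show ?thesis
        using not_in dset_dev_iff[OF False] by (simp add: without_def)
    qed
  qed
qed

lemma SW_dev_eq:
  assumes "m \<in> buyers E" and "t_dev m \<noteq> None"
  shows "SW E t_dev m = SW E t_true m"
proof -
  have "m \<noteq> i"
    using assms(1) intermediate buyer_not_intermediate by blast
  then show ?thesis
    unfolding SW_def using t_dev_eq_t_true assms(2) lcc_dev_eq by (simp add: bid_of_def)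
qed

lemma crit_succ_true_notin_dev_chain:
  assumes m': "m' \<in> winners E t_dev" and on_chain': "i \<in> set (lcc E t_dev m')"
    and m: "m \<in> winners E t_true" and on_chain: "i \<in> set (lcc E t_true m)"
    and "crit_succ E t_true m i \<noteq> crit_succ E t_dev m' i"
  shows "crit_succ E t_true m i \<notin> set (lcc E t_dev m' @ [m'])"
proof
  let ?c' = "crit_succ E t_dev m' i" and ?c = "crit_succ E t_true m i"
  note informed' = winnersD(2)[OF m'] and informed = winnersD(2)[OF m]
  assume c: "?c \<in> set (lcc E t_dev m' @ [m'])"
  have "set (lcc E t_dev m' @ [m']) \<subseteq> {x. t_dev x \<noteq> None}"
    using crit_seq_eq_crit_list[OF feasible_dev informed'] unfolding crit_seq_def by blast
  then have "t_dev i \<noteq> None" and "t_dev ?c \<noteq> None"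
    using on_chain' c by auto
  then have "lcc E t_dev ?c = lcc E t_dev ?c'"
    using lcc_crit_succ[OF feasible_dev informed' on_chain'] lcc_crit_succ[OF feasible_true informed on_chain]
      lcc_dev_eq by simp
  then show False
    using assms(5) lcc_inj_on_crit_list[OF feasible_dev informed' c]
      crit_succ_in_crit_list[OF feasible_dev informed' on_chain']
    by simp
qed

lemma Wstar_succ_dev_le:
  assumes m': "m' \<in> winners E t_dev" and on_chain': "i \<in> set (lcc E t_dev m')"
    and m: "m \<in> winners E t_true" and on_chain: "i \<in> set (lcc E t_true m)"
  shows "Wstar E (without t_dev (dset E t_dev (crit_succ E t_dev m' i)))
           \<le> Wstar E (without t_true (dset E t_true (crit_succ E t_true m i)))"
proof (cases "crit_succ E t_true m i = crit_succ E t_dev m' i")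
  case True
  then show ?thesis
    using dset_dev_iff by (intro Wstar_mono profile_le_without profile_le_dev_true) auto
next
  case False
  let ?c = "crit_succ E t_true m i"
  note informed' = winnersD(2)[OF m']
  txt \<open>The successor \<open>?c\<close> is then off the chain chosen under \<open>t_dev\<close>, so the optimum
    under \<open>t_dev\<close> survives the removal of its subtree under \<open>t_true\<close>.\<close>
  have "?c \<notin> set (lcc E t_true m' @ [m'])"
    using crit_succ_true_notin_dev_chain[OF assms False] lcc_dev_eq[OF informed'] by simp
  then have "SW E t_true m' \<le> Wstar E (without t_true (dset E t_true ?c))"
    by (rule SW_le_Wstar_without_dset[OF feasible_true winnersD(1)[OF m'] informed_dev_imp_true[OF informed']])
  moreover have "Wstar E (without t_dev (dset E t_dev (crit_succ E t_dev m' i))) \<le> SW E t_dev m'"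
    using Wstar_without_le Wstar_winner[OF feasible_dev m'] by metis
  ultimately show ?thesis
    using SW_dev_eq[OF winnersD(1) informed'] m' by simp
qed

lemma utility_dev_on_chain_le:
  assumes m': "m' \<in> winners E t_dev" and on_chain': "i \<in> set (lcc E t_dev m')"
    and w: "w \<in> outcomes E t_true"
  shows "utility E b t_dev (Some m') i \<le> utility E b t_true w i"
proof -
  let ?A = "Wstar E (without t_true (dset E t_true i))"
  let ?B' = "Wstar E (without t_dev (dset E t_dev (crit_succ E t_dev m' i)))"
  have u': "utility E b t_dev (Some m') i = ?B' - ?A"
    using utility_on_chain[OF feasible_dev m' on_chain'] without_dset_dev by simp
  show ?thesis
  proof (cases "\<exists>m. w = Some m \<and> i \<in> set (lcc E t_true m)")
    case True
    then obtain m where w_eq: "w = Some m" and on_chain: "i \<in> set (lcc E t_true m)"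
      by blast
    then have m: "m \<in> winners E t_true"
      using w outcomes_Some by blast
    then show ?thesis
      using u' w_eq utility_on_chain[OF feasible_true m on_chain]
        Wstar_succ_dev_le[OF m' on_chain' m on_chain] by simp
  next
    case False
    then have "Wstar E t_true \<le> ?A"
      using intermediate buyer_not_intermediate w outcomes_Some winnersD(1)
      by (intro Wstar_le_without_dset_off_chain[OF feasible_true w]) fastforce
    moreover have "?B' \<le> Wstar E t_true"
      using Wstar_without_le Wstar_mono[OF profile_le_dev_true] by (rule order_trans)
    ultimately show ?thesis
      using u' utility_intermediate_nonneg[where b = b, OF feasible_true intermediate w] by linarith
  qed
qed

lemma utility_dev_le_true:
  assumes w': "w' \<in> outcomes E t_dev" and w: "w \<in> outcomes E t_true"
  shows "utility E b t_dev w' i \<le> utility E b t_true w i"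
proof -
  have nonneg: "0 \<le> utility E b t_true w i"
    by (rule utility_intermediate_nonneg[OF feasible_true intermediate w])
  from w' show ?thesis
  proof (cases rule: outcomes_cases)
    case 1
    then show ?thesis
      using nonneg by (simp add: utility_None)
  next
    case (2 m')
    show ?thesis
    proof (cases "i \<in> set (lcc E t_dev m')")
      case True
      then show ?thesis
        using 2 utility_dev_on_chain_le w by simp
    next
      case False
      then have "i \<notin> set (lcc E t_dev m' @ [m'])"
        using winnersD(1)[OF 2(2)] intermediate buyer_not_intermediate by auto
      then show ?thesis
        using 2 nonneg utility_off_chain[OF feasible_dev] by simp
    qed
  qed
qed

lemma incentive_compatible_intermediate:
  "expected_utility E b t_dev i \<le> expected_utility E b t_true i"
  by (rule expected_utility_le) (rule utility_dev_le_true)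

end

context tree_market
begin

lemma incentive_compatible:
  assumes "\<forall>i\<in>buyers E. 0 \<le> b i"
  shows "incentive_compatible E b r"
  unfolding incentive_compatible_def
proof (intro allI impI ballI)
  fix \<rho> i x
  assume valid: "\<forall>j\<in>agents E. valid_report E r j (\<rho> j)" and "i \<in> agents E"
    and x: "valid_report E r i x"
  show "expected_utility E b (realize E (\<rho>(i := x))) i
          \<le> expected_utility E b (realize E (\<rho>(i := truthful E b r i))) i"
  proof (cases "i \<in> buyers E")
    case True
    then show ?thesis
      using incentive_compatible_buyer[OF valid True _ x] assms by (simp add: truthful_def)
  next
    case False
    then have i: "i \<in> intermediates E"
      using \<open>i \<in> agents E\<close> unfolding intermediates_def by blast
    then obtain R where x_eq: "x = Share R" and "R \<subseteq> r i"
      using x buyer_not_intermediate unfolding valid_report_def by blast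
    interpret sharing_deviation E r \<rho> i R
      by unfold_locales (use valid i \<open>R \<subseteq> r i\<close> in auto)
    show ?thesis
      using incentive_compatible_intermediate False x_eq by (simp add: truthful_def)
  qed
qed

end

theorem proposition1:
  fixes E :: "'a market" and b :: "'a \<Rightarrow> real" and r :: "'a \<Rightarrow> 'a set"
  assumes "finite (agents E)"
    and "seller E \<notin> agents E"
    and "buyers E \<subseteq> agents E"
    and "seller_nbrs E \<subseteq> agents E"
    and "\<forall>i\<in>intermediates E. r i \<subseteq> agents E"
    and "\<forall>i\<in>intermediates E. 0 \<le> cost E i"
    and "\<forall>i\<in>buyers E. 0 \<le> b i"
    and "is_tree (net_vertices E) (net_edges E r)"
  shows "efficient E r \<and> individually_rational E b r \<and> incentive_compatible E b r \<and>
         weakly_budget_balanced E r \<and>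
         (\<forall>t. feasible E r t \<longrightarrow>
              (\<forall>w\<in>outcomes E t. vickrey_revenue E t \<le> revenue E t w))"
proof -
  txt \<open>The sign of the costs (\<open>assms(6)\<close>) is irrelevant: an intermediate on the winning chain
    is reimbursed her cost, whatever it is.\<close>
  interpret tree_market E r
    using assms by unfold_locales auto
  show ?thesis
    using efficient individually_rational incentive_compatible[OF assms(7)]
      weakly_budget_balanced vickrey_le_revenue by blast
qed

end
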